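(* Let $b\in\mathbb N$, $b\ge 2$. Then there exists $m\in\mathbb N$ such that $m$ is antipalindromic in base $b$ and also antipalindromic in at least one other integer base $c\ge 2$ with $c\neq b$ and $c<m$.
   Context: For an integer $b\ge 2$, every natural number $x$ has a unique base-$b$ expansion $x=a_\ell b^\ell+\dots+a_1b+a_0$ with $a_0,\dots,a_\ell\in\{0,1,\dots,b-1\}$ and $a_\ell\neq 0$. The number $x$ is antipalindromic in base $b$ if $a_j=b-1-a_{\ell-j}$ for all $j\in\{0,1,\dots,\ell\}$. *)

theory Defs
  imports Main
begin

fun digits :: "nat \<Rightarrow> nat \<Rightarrow> nat list" where
  "digits b x = (if b < 2 \<or> x = 0 then [] else x mod b # digits b (x div b))"

definition antipalindromic :: "nat \<Rightarrow> nat \<Rightarrow> bool" where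
  "antipalindromic b x \<longleftrightarrow> b \<ge> 2 \<and> x > 0 \<and>
     (let ds = digits b x; l = length ds - 1 in
        \<forall>j \<le> l. int (ds ! j) = int b - 1 - int (ds ! (l - j)))"

end

theory Submission imports Defs begin

text \<open>The number m = b^3 + b^2 - 2 has base-b digits 1, 0, b-1, b-2, so it is antipalindromic
  in base b. It is even, m = 2(c - 1) with c = b^2(b + 1)/2, and every multiple k(c - 1)
  with 2 \<le> k \<le> c is a two-digit antipalindrome k-1, c-k in base c. Since c > b and
  m > c, the base c is the required second base.\<close>

declare digits.simps [simp del]

lemma digits_add_mult:
  assumes "c \<ge> 2" "r < c" "r \<noteq> 0 \<or> x \<noteq> 0"
  shows "digits c (r + c * x) = r # digits c x"
  using assms by (subst digits.simps) simp

lemma digits_eq_Nil_iff: "digits c x = [] \<longleftrightarrow> c < 2 \<or> x = 0"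
  by (subst digits.simps) simp

lemma antipalindromicI:
  assumes "c \<ge> 2" "digits c x = ds" "ds \<noteq> []"
    and "\<forall>j < length ds. ds ! j + ds ! (length ds - 1 - j) + 1 = c"
  shows "antipalindromic c x"
proof -
  have "x > 0" using assms(1-3) digits_eq_Nil_iff by auto
  moreover have "\<forall>j \<le> length ds - 1. int (ds ! j) = int c - 1 - int (ds ! (length ds - 1 - j))"
  proof (intro allI impI)
    fix j assume "j \<le> length ds - 1"
    with \<open>ds \<noteq> []\<close> have "j < length ds" by (cases ds) auto
    with assms(4) show "int (ds ! j) = int c - 1 - int (ds ! (length ds - 1 - j))" by force
  qed
  ultimately show ?thesis
    using assms(1,2) unfolding antipalindromic_def Let_def by blast
qed

lemma antipalindromic_two_digits:
  assumes "2 \<le> k" "k \<le> c"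
  shows "antipalindromic c (k * (c - 1))"
proof -
  have "digits c ((c - k) + c * (k - 1)) = (c - k) # digits c (k - 1)"
    by (rule digits_add_mult) (use assms in auto)
  also have "digits c (k - 1) = [k - 1]"
    using assms digits_add_mult[of c "k - 1" 0] by (simp add: digits_eq_Nil_iff)
  finally have "digits c ((c - k) + c * (k - 1)) = [c - k, k - 1]" .
  moreover have "(c - k) + c * (k - 1) = k * (c - 1)"
    using assms by (simp add: algebra_simps diff_mult_distrib2)
  moreover have "\<forall>j < 2. [c - k, k - 1] ! j + [c - k, k - 1] ! (1 - j) + 1 = c"
    using assms by (auto simp: less_2_cases_iff)
  ultimately show ?thesis
    using assms by (intro antipalindromicI) auto
qed

lemma antipalindromic_cube_plus_square:
  assumes "b \<ge> 2"
  shows "antipalindromic b (b^3 + b^2 - 2)"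
proof -
  define ds where "ds = [b - 2, b - 1, 0, 1]"
  have "digits b ((b - 2) + b * ((b - 1) + b * (0 + b * 1)))
      = (b - 2) # digits b ((b - 1) + b * (0 + b * 1))"
    by (rule digits_add_mult) (use assms in auto)
  also have "digits b ((b - 1) + b * (0 + b * 1)) = (b - 1) # digits b (0 + b * 1)"
    by (rule digits_add_mult) (use assms in auto)
  also have "digits b (0 + b * 1) = 0 # digits b 1"
    by (rule digits_add_mult) (use assms in auto)
  also have "digits b 1 = [1]"
    using assms digits_add_mult[of b 1 0] by (simp add: digits_eq_Nil_iff)
  finally have "digits b ((b - 2) + b * ((b - 1) + b * (0 + b * 1))) = ds"
    unfolding ds_def .
  moreover have "(b - 2) + b * ((b - 1) + b * (0 + b * 1)) = b^3 + b^2 - 2"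
  proof -
    obtain n where "b = n + 2" using assms le_Suc_ex by (metis add.commute)
    then show ?thesis by (simp add: power3_eq_cube power2_eq_square algebra_simps)
  qed
  moreover have "\<forall>j < length ds. ds ! j + ds ! (length ds - 1 - j) + 1 = b"
    using assms unfolding ds_def by (auto simp: less_Suc_eq numeral_eq_Suc)
  moreover have "ds \<noteq> []" unfolding ds_def by simp
  ultimately show ?thesis using assms antipalindromicI by metis
qed

theorem mainTheorem15:
  fixes b :: nat
  assumes "b \<ge> 2"
  shows "\<exists>m::nat. antipalindromic b m \<and>
           (\<exists>c::nat. c \<ge> 2 \<and> c \<noteq> b \<and> c < m \<and> antipalindromic c m)"
proof -
  have "even (b^2 * (b + 1))" by simp
  then obtain c where c: "b^2 * (b + 1) = 2 * c" by (rule evenE)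
  have "b * 2 * 3 \<le> b^2 * (b + 1)"
    using assms by (intro mult_mono) (auto simp: power2_eq_square)
  then have "c \<ge> 6" "b < c" using c assms by linarith+
  have m: "b^3 + b^2 - 2 = 2 * (c - 1)"
    using c by (simp add: power3_eq_cube power2_eq_square algebra_simps)
  show ?thesis
  proof (intro exI conjI)
    show "antipalindromic b (b^3 + b^2 - 2)"
      using assms by (rule antipalindromic_cube_plus_square)
    show "antipalindromic c (b^3 + b^2 - 2)"
      unfolding m using \<open>c \<ge> 6\<close> by (intro antipalindromic_two_digits) auto
  qed (use \<open>c \<ge> 6\<close> \<open>b < c\<close> m in auto)
qed

end
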